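(* Let $N,K,V$ be positive integers. For $v=1,\dots,V$ let $\mathbf{z}_i^v\in\mathbb{R}^{d_v}$ ($i=1,\dots,N$) be representations, $\boldsymbol{\mu}_1^v,\dots,\boldsymbol{\mu}_K^v\in\mathbb{R}^{d_v}$ cluster centroids, and $w^v>0$ scaling factors. Let $\mathcal{S}(\mathbf{a},\mathbf{b})=\frac{1}{1+\|\mathbf{a}-\mathbf{b}\|_2^2}$ and define view-wise soft labels $y_{ij}^v=\mathcal{S}(\mathbf{z}_i^v,\boldsymbol{\mu}_j^v)/\sum_{k=1}^K\mathcal{S}(\mathbf{z}_i^v,\boldsymbol{\mu}_k^v)$. Define the scaled representation $\mathbf{z}_i=[w^1\mathbf{z}_i^1\ \cdots\ w^V\mathbf{z}_i^V]$, the scaled centroids $\mathbf{c}_j=[w^1\boldsymbol{\mu}_j^1\ \cdots\ w^V\boldsymbol{\mu}_j^V]$, and the robust soft labels $y_{ij(t)}=\mathcal{S}(\mathbf{z}_i,\mathbf{c}_j)/\sum_{k=1}^K\mathcal{S}(\mathbf{z}_i,\mathbf{c}_k)$. Suppose that for a sample $i$ and a cluster $a$, the sample is informative and assigned to cluster $a$ in every view, i.e. $y_{ia}^v>y_{ij}^v$ for all $j\neq a$ and all $v=1,\dots,V$. Then $y_{ia(t)}>y_{ij(t)}$ for all $j\neq a$, i.e. the cluster assignment $\arg\max_j y_{ij(t)}$ of the sample in the robust soft labels is also $a$.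
   Context: Setting: multi-view clustering with $N$ samples, $V$ views, and $K$ clusters; $\mathbf{z}_i^v$ is the learned representation of sample $i$ in view $v$, and the cluster assignment of sample $i$ from soft labels $y_{ij}$ is $\arg\max_j y_{ij}$. *)

theory Defs
  imports "HOL-Analysis.Analysis"
begin

text \<open>Vectors in R^d are represented as functions on a finite coordinate index set I.
  Squared Euclidean distance over coordinate set I.\<close>
definition sqdist_on :: "'i set \<Rightarrow> ('i \<Rightarrow> real) \<Rightarrow> ('i \<Rightarrow> real) \<Rightarrow> real" where
  "sqdist_on I a b = (\<Sum>l\<in>I. (a l - b l)^2)"

definition simS :: "'i set \<Rightarrow> ('i \<Rightarrow> real) \<Rightarrow> ('i \<Rightarrow> real) \<Rightarrow> real" where
  "simS I a b = 1 / (1 + sqdist_on I a b)"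

definition soft_label :: "'i set \<Rightarrow> nat \<Rightarrow> ('i \<Rightarrow> real) \<Rightarrow> (nat \<Rightarrow> 'i \<Rightarrow> real) \<Rightarrow> nat \<Rightarrow> real" where
  "soft_label I K z c j = simS I z (c j) / (\<Sum>k<K. simS I z (c k))"

text \<open>Concatenation [w^1 x^1 ... w^V x^V] of V scaled view vectors, x v : {..<d v} -> R,
  as a function on the coordinate set of pairs (v, l) with v < V and l < d v.\<close>
definition concat_coords :: "nat \<Rightarrow> (nat \<Rightarrow> nat) \<Rightarrow> (nat \<times> nat) set" where
  "concat_coords V d = Sigma {..<V} (\<lambda>v. {..<d v})"

definition scaled_concat :: "(nat \<Rightarrow> real) \<Rightarrow> (nat \<Rightarrow> nat \<Rightarrow> real) \<Rightarrow> nat \<times> nat \<Rightarrow> real" where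
  "scaled_concat w x = (\<lambda>(v, l). w v * x v l)"

end

theory Submission
  imports Defs
begin

text \<open>All soft labels of a sample share one positive denominator, and the Student-t kernel
  is strictly decreasing in the squared distance, so comparing soft labels amounts to comparing
  squared distances to the centroids. The squared distance between scaled concatenations is the
  sum over the views of the view distances weighted by the squared scaling factors; a centroid
  that is strictly closer in every view is therefore strictly closer in the concatenation.\<close>

lemma sqdist_on_nonneg: "sqdist_on I a b \<ge> 0"
  unfolding sqdist_on_def by (simp add: sum_nonneg)

lemma simS_pos: "simS I a b > 0"
  unfolding simS_def using sqdist_on_nonneg[of I a b] by simp

lemma simS_less_iff: "simS I z x < simS I z y \<longleftrightarrow> sqdist_on I z y < sqdist_on I z x"
  unfolding simS_def using sqdist_on_nonneg[of I z x] sqdist_on_nonneg[of I z y]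
  by (simp add: divide_simps)

lemma sum_simS_pos: "(K::nat) > 0 \<Longrightarrow> (\<Sum>k<K. simS I z (c k)) > 0"
  by (intro sum_pos) (auto simp: simS_pos)

lemma soft_label_less_iff:
  assumes "K > 0"
  shows "soft_label I K z c j < soft_label I K z c a \<longleftrightarrow> sqdist_on I z (c a) < sqdist_on I z (c j)"
  unfolding soft_label_def
  using sum_simS_pos[OF assms, of I z c] by (simp add: divide_less_cancel simS_less_iff)

lemma sqdist_on_scaled_concat:
  "sqdist_on (concat_coords V d) (scaled_concat w x) (scaled_concat w y)
   = (\<Sum>v<V. (w v)\<^sup>2 * sqdist_on {..<d v} (x v) (y v))"
proof -
  have "(w v * x v l - w v * y v l)\<^sup>2 = (w v)\<^sup>2 * (x v l - y v l)\<^sup>2" for v l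
    by (simp add: power2_eq_square algebra_simps)
  then show ?thesis
    unfolding sqdist_on_def concat_coords_def scaled_concat_def
    using sum.Sigma[of "{..<V}" "\<lambda>v. {..<d v}" "\<lambda>v l. (w v * x v l - w v * y v l)\<^sup>2"]
    by (simp add: sum_distrib_left case_prod_unfold)
qed

lemma sqdist_on_scaled_concat_strict_mono:
  assumes "V > 0"
    and "\<And>v. v < V \<Longrightarrow> w v \<noteq> 0"
    and "\<And>v. v < V \<Longrightarrow> sqdist_on {..<d v} (z v) (x v) < sqdist_on {..<d v} (z v) (y v)"
  shows "sqdist_on (concat_coords V d) (scaled_concat w z) (scaled_concat w x)
       < sqdist_on (concat_coords V d) (scaled_concat w z) (scaled_concat w y)"
  unfolding sqdist_on_scaled_concat
proof (rule sum_strict_mono)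
  show "{..<V} \<noteq> {}" using \<open>V > 0\<close> by auto
next
  fix v assume "v \<in> {..<V}"
  then show "(w v)\<^sup>2 * sqdist_on {..<d v} (z v) (x v) < (w v)\<^sup>2 * sqdist_on {..<d v} (z v) (y v)"
    using assms(2,3) by (intro mult_strict_left_mono) simp_all
qed simp

theorem theorem3:
  fixes N K V :: nat
    and d :: "nat \<Rightarrow> nat"
    and z :: "nat \<Rightarrow> nat \<Rightarrow> nat \<Rightarrow> real"
    and mu :: "nat \<Rightarrow> nat \<Rightarrow> nat \<Rightarrow> real"
    and w :: "nat \<Rightarrow> real"
    and i a :: nat
  assumes "N > 0" and "K > 0" and "V > 0"
    and "\<And>v. v < V \<Longrightarrow> w v > 0"
    and "i < N" and "a < K"
    and informative: "\<And>v j. v < V \<Longrightarrow> j < K \<Longrightarrow> j \<noteq> a \<Longrightarrow>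
           soft_label {..<d v} K (z i v) (\<lambda>k. mu k v) a > soft_label {..<d v} K (z i v) (\<lambda>k. mu k v) j"
  shows "\<forall>j<K. j \<noteq> a \<longrightarrow>
           soft_label (concat_coords V d) K (scaled_concat w (z i)) (\<lambda>k. scaled_concat w (mu k)) a
         > soft_label (concat_coords V d) K (scaled_concat w (z i)) (\<lambda>k. scaled_concat w (mu k)) j"
proof (intro allI impI)
  fix j assume "j < K" "j \<noteq> a"
  then have "sqdist_on {..<d v} (z i v) (mu a v) < sqdist_on {..<d v} (z i v) (mu j v)" if "v < V" for v
    using informative[OF that] by (simp add: soft_label_less_iff[OF \<open>K > 0\<close>])
  then have "sqdist_on (concat_coords V d) (scaled_concat w (z i)) (scaled_concat w (mu a))
           < sqdist_on (concat_coords V d) (scaled_concat w (z i)) (scaled_concat w (mu j))"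
    using \<open>V > 0\<close> by (intro sqdist_on_scaled_concat_strict_mono) (auto dest: assms(4))
  then show "soft_label (concat_coords V d) K (scaled_concat w (z i)) (\<lambda>k. scaled_concat w (mu k)) a
           > soft_label (concat_coords V d) K (scaled_concat w (z i)) (\<lambda>k. scaled_concat w (mu k)) j"
    by (simp add: soft_label_less_iff[OF \<open>K > 0\<close>])
qed

end
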